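(* Let $\mathcal G$ be a constructor GRS over a finite signature $\mathcal F$ and let $G\in\mathcal{TG}_{\mathrm{nrm}}(\mathcal F)$. (1) If $(H,l,r)\in\mathcal G$ and $\varphi:H{\restriction}l\to G$ is a homomorphism, then every path in $G$ from $\rho_G$ to $\varphi(l)$ is a safe path. (2) If moreover $\mathcal G$ is precedence terminating with argument separation and $G\to_{\mathcal G}H'$, then $H'\in\mathcal{TG}_{\mathrm{nrm}}(\mathcal F)$.
   Context: Term graphs. $\mathcal F=\mathcal C\cup\mathcal D$ is a finite signature (constructors and defined symbols, disjoint) with arity function $\mathrm{ar}$. A labeled graph consists of a finite acyclic directed graph $(V_G,E_G)$, a partial labeling $\mathrm{lab}_G:V_G\to\mathcal F$ and a successor function $\mathrm{att}_G:V_G\to V_G^*$ such that $\mathrm{att}_G(v)$ has length $\mathrm{ar}(\mathrm{lab}_G(v))$ if $v$ is labeled and is empty otherwise, and the set of entries of $\mathrm{att}_G(v)$ equals $\{u:(v,u)\in E_G\}$; the $j$-th entry is the $j$-th successor of $v$. Unlabeled nodes act as variables. A term graph additionally has a root $\rho_G$ from which every node is reachable; $\mathcal{TG}(\mathcal F)$ is the set of term graphs over $\mathcal F$ and $\mathcal{TG}(\mathcal C)$ those whose labeled nodes all carry constructors. $G{\restriction}v$ is the sub-term graph of nodes reachable from $v$, rooted at $v$; $H\subseteq G$ means $H=G{\restriction}v$ for some $v$. $G$ is closed if every node is labeled; basic if $\mathrm{lab}_G(\rho_G)\in\mathcal D$ and $G{\restriction}v\in\mathcal{TG}(\mathcal C)$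 for every successor $v$ of $\rho_G$. A path $\langle v_1,m_1,\dots,m_{k-1},v_k\rangle$ is a sequence of nodes where $v_{j+1}$ is the $m_j$-th successor of $v_j$. Argument separation. The argument positions of each $f\in\mathcal F$ are split into normal and safe ones, written $f(x_1,\dots,x_k;x_{k+1},\dots,x_{k+l})$; constructors have only safe positions; nodes with the same label have the same separation. For a labeled node $v$, $\mathrm{nrm}(v)$ (resp. $\mathrm{safe}(v)$) is the set of successors at normal (resp. safe) positions. $H\sqsubset_{\mathrm{nrm}}G$ means $H\subseteq G{\restriction}v$ for some $v\in\mathrm{nrm}(\rho_G)$. Rewriting. A homomorphism $\varphi$ from labeled graph $G$ to $H$ is a map $V_G\to V_H$ with $\mathrm{lab}_H(\varphi(v))=\mathrm{lab}_G(v)$ and $\mathrm{att}_H(\varphi(v))=\varphi(v_1),\dots,\varphi(v_k)$ whenever $v$ is labeled with $\mathrm{att}_G(v)=v_1,\dots,v_k$ (nothing is required at unlabeled nodes); it preserves the normal/safe split. A graph rewrite rule $(K,l,r)$ is a labeled graph $K$ with distinct nodes $l,r$ such that every unlabeled node of $K{\restriction}r$ lies in $K{\restriction}l$; it is a constructor rule if $K{\restriction}l$ is basic. A GRS is a (possibly infinite) set of rules; a constructor GRS consists of constructor rules. A redex in $G$ is a pair of a rule $(K,l,r)$ and a homomorphism $\varphi:K{\restriction}l\to G$; the rewrite step $G\to_{\mathcal G}H$ is the standard build/redirection/garbage-collection step: the labeled part of $K{\restriction}r$ not already in $K{\restriction}l$ is copied into $G$ (unlabeled nodes being mapped via $\varphi$),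 all edges into $\varphi(l)$ (and the root, if it is $\varphi(l)$) are redirected to the image of $r$, and nodes unreachable from the root are removed. Thus $H$ arises from $G$ by replacing $G{\restriction}\varphi(l)$ with an instance of $K{\restriction}r$. Precedence termination with argument separation. A precedence $\sqsubset$ is a well-founded strict partial order on $\mathcal F$ in which all constructors are minimal. For term graphs $H,G$ (sub-term graphs of a common graph), $H\sqsubset_{\mathrm{pt}}G$ holds if $\mathrm{lab}_H(v)\sqsubset\mathrm{lab}_G(\rho_G)$ for every labeled node $v$ of $H$ and additionally either (1) $H=G{\restriction}u$ or $H\sqsubset_{\mathrm{pt}}G{\restriction}u$ for some successor $u$ of $\rho_G$; or (2) $\rho_H$ is labeled, $H{\restriction}v\sqsubset_{\mathrm{nrm}}G$ for each $v\in\mathrm{nrm}(\rho_H)$, and $H{\restriction}v\sqsubset_{\mathrm{pt}}G$ for each $v\in\mathrm{safe}(\rho_H)$. A GRS $\mathcal G$ is precedence terminating with argument separation if for some argument separation and some precedence, $K{\restriction}r\sqsubset_{\mathrm{pt}}K{\restriction}l$ for every rule $(K,l,r)\in\mathcal G$. Safe paths and $\mathcal{TG}_{\mathrm{nrm}}$. A path $\langle v_1,m_1,\dots,v_k\rangle$ is safe if $v_{j+1}\in\mathrm{safe}(v_j)$ for all $j<k$ (the trivial path $\langle v\rangle$ is safe). $\mathcal{TG}_{\mathrm{nrm}}(\mathcal F)\subseteq\mathcal{TG}(\mathcal F)$ is defined inductively: $G\in\mathcal{TG}_{\mathrm{nrm}}(\mathcal F)$ if $G\in\mathcal{TG}(\mathcal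 C)$, or if $G{\restriction}v\in\mathcal{TG}(\mathcal C)$ for every $v\in\mathrm{nrm}(\rho_G)$ and $G{\restriction}v\in\mathcal{TG}_{\mathrm{nrm}}(\mathcal F)$ for every $v\in\mathrm{safe}(\rho_G)$. *)

theory Defs
  imports Main
begin

text \<open>A labeled graph: node set, partial labeling (None = unlabeled node, i.e. a variable),
  and successor lists.
  Successor positions are 0-based list indices.\<close>

record ('f,'v) lgraph =
  nodes :: "'v set"
  lab :: "'v \<Rightarrow> 'f option"
  att :: "'v \<Rightarrow> 'v list"

record ('f,'v) tgraph = "('f,'v) lgraph" + root :: 'v

definition edge_rel :: "('f,'v,'x) lgraph_scheme \<Rightarrow> ('v \<times> 'v) set" where
  "edge_rel G = {(v,u). v \<in> nodes G \<and> u \<in> set (att G v)}"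

definition reach :: "('f,'v,'x) lgraph_scheme \<Rightarrow> 'v \<Rightarrow> 'v set" where
  "reach G v = {u. (v,u) \<in> (edge_rel G)\<^sup>*}"

definition wf_lgraph :: "'f set \<Rightarrow> ('f \<Rightarrow> nat) \<Rightarrow> ('f,'v,'x) lgraph_scheme \<Rightarrow> bool" where
  "wf_lgraph F ar G \<longleftrightarrow> finite (nodes G) \<and>
     (\<forall>v\<in>nodes G. set (att G v) \<subseteq> nodes G \<and>
        (case lab G v of Some f \<Rightarrow> f \<in> F \<and> length (att G v) = ar f
                       | None \<Rightarrow> att G v = [])) \<and>
     acyclic (edge_rel G)"

definition is_tg :: "'f set \<Rightarrow> ('f \<Rightarrow> nat) \<Rightarrow> ('f,'v) tgraph \<Rightarrow> bool" where
  "is_tg F ar G \<longleftrightarrow> wf_lgraph F ar G \<and> root G \<in> nodes G \<and> nodes G \<subseteq> reach G (root G)"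

definition sub :: "('f,'v,'x) lgraph_scheme \<Rightarrow> 'v \<Rightarrow> ('f,'v) tgraph" where
  "sub G v = \<lparr> nodes = reach G v,
              lab = (\<lambda>x. if x \<in> reach G v then lab G x else None),
              att = (\<lambda>x. if x \<in> reach G v then att G x else []),
              root = v \<rparr>"

definition tgC :: "'f set \<Rightarrow> ('f,'v,'x) lgraph_scheme \<Rightarrow> 'v \<Rightarrow> bool" where
  "tgC C G v \<longleftrightarrow> (\<forall>u\<in>reach G v. \<forall>f. lab G u = Some f \<longrightarrow> f \<in> C)"

text \<open>na f is the number of normal argument positions of f: positions 0..na f - 1 are
  normal, positions na f .. ar f - 1 are safe.\<close>
definition arg_sep :: "'f set \<Rightarrow> 'f set \<Rightarrow> ('f \<Rightarrow> nat) \<Rightarrow> ('f \<Rightarrow> nat) \<Rightarrow> bool" where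
  "arg_sep F C ar na \<longleftrightarrow> (\<forall>f\<in>F. na f \<le> ar f \<and> (f \<in> C \<longrightarrow> na f = 0))"

definition nrm_succ :: "('f \<Rightarrow> nat) \<Rightarrow> ('f,'v,'x) lgraph_scheme \<Rightarrow> 'v \<Rightarrow> 'v set" where
  "nrm_succ na G v = (case lab G v of None \<Rightarrow> {}
     | Some f \<Rightarrow> {att G v ! i | i. i < na f \<and> i < length (att G v)})"

definition safe_succ :: "('f \<Rightarrow> nat) \<Rightarrow> ('f,'v,'x) lgraph_scheme \<Rightarrow> 'v \<Rightarrow> 'v set" where
  "safe_succ na G v = (case lab G v of None \<Rightarrow> {}
     | Some f \<Rightarrow> {att G v ! i | i. na f \<le> i \<and> i < length (att G v)})"

definition is_path :: "('f,'v,'x) lgraph_scheme \<Rightarrow> 'v list \<Rightarrow> nat list \<Rightarrow> bool" where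
  "is_path G vs ms \<longleftrightarrow> vs \<noteq> [] \<and> set vs \<subseteq> nodes G \<and> length ms = length vs - 1 \<and>
     (\<forall>j < length ms. ms ! j < length (att G (vs ! j)) \<and> vs ! Suc j = att G (vs ! j) ! (ms ! j))"

definition safe_path :: "('f \<Rightarrow> nat) \<Rightarrow> ('f,'v,'x) lgraph_scheme \<Rightarrow> 'v list \<Rightarrow> bool" where
  "safe_path na G vs \<longleftrightarrow> (\<forall>j. Suc j < length vs \<longrightarrow> vs ! Suc j \<in> safe_succ na G (vs ! j))"

inductive nrm_at :: "'f set \<Rightarrow> ('f \<Rightarrow> nat) \<Rightarrow> ('f,'v,'x) lgraph_scheme \<Rightarrow> 'v \<Rightarrow> bool"
  for C na G where
  constr: "tgC C G v \<Longrightarrow> nrm_at C na G v"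
| sep: "(\<forall>u\<in>nrm_succ na G v. tgC C G u) \<Longrightarrow> (\<forall>u\<in>safe_succ na G v. nrm_at C na G u)
        \<Longrightarrow> nrm_at C na G v"

definition tg_nrm :: "'f set \<Rightarrow> 'f set \<Rightarrow> ('f \<Rightarrow> nat) \<Rightarrow> ('f \<Rightarrow> nat) \<Rightarrow> ('f,'v) tgraph \<Rightarrow> bool" where
  "tg_nrm F C ar na G \<longleftrightarrow> is_tg F ar G \<and> nrm_at C na G (root G)"

definition hom :: "('f,'w,'x) lgraph_scheme \<Rightarrow> 'w \<Rightarrow> ('f,'v,'y) lgraph_scheme \<Rightarrow> ('w \<Rightarrow> 'v) \<Rightarrow> bool" where
  "hom K l G \<phi> \<longleftrightarrow> (\<forall>v\<in>reach K l. \<phi> v \<in> nodes G \<and>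
      (lab K v \<noteq> None \<longrightarrow> lab G (\<phi> v) = lab K v \<and> att G (\<phi> v) = map \<phi> (att K v)))"

definition is_rule :: "'f set \<Rightarrow> ('f \<Rightarrow> nat) \<Rightarrow> ('f,'w) lgraph \<times> 'w \<times> 'w \<Rightarrow> bool" where
  "is_rule F ar \<rho> = (case \<rho> of (K,l,r) \<Rightarrow>
     wf_lgraph F ar K \<and> l \<in> nodes K \<and> r \<in> nodes K \<and> l \<noteq> r \<and>
     (\<forall>v\<in>reach K r. lab K v = None \<longrightarrow> v \<in> reach K l))"

definition basic_at :: "'f set \<Rightarrow> 'f set \<Rightarrow> ('f,'v,'x) lgraph_scheme \<Rightarrow> 'v \<Rightarrow> bool" where
  "basic_at F C K l \<longleftrightarrow> (\<exists>f. lab K l = Some f \<and> f \<in> F - C) \<and> (\<forall>u\<in>set (att K l). tgC C K u)"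

definition constructor_grs :: "'f set \<Rightarrow> 'f set \<Rightarrow> ('f \<Rightarrow> nat) \<Rightarrow> (('f,'w) lgraph \<times> 'w \<times> 'w) set \<Rightarrow> bool" where
  "constructor_grs F C ar R \<longleftrightarrow> (\<forall>(K,l,r)\<in>R. is_rule F ar (K,l,r) \<and> basic_at F C K l)"

text \<open>Result of the rewrite step: build (new nodes named by the injection psi, fresh for G),
  redirection of all edges into phi(l) (and the root) to the image of r, garbage collection.\<close>
definition rewrite_result :: "('f,'v) tgraph \<Rightarrow> ('f,'w) lgraph \<Rightarrow> 'w \<Rightarrow> 'w \<Rightarrow> ('w \<Rightarrow> 'v) \<Rightarrow> ('w \<Rightarrow> 'v)
    \<Rightarrow> ('f,'v) tgraph" where
  "rewrite_result G K l r \<phi> \<psi> =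
    (let N = reach K r - reach K l;
         m = (\<lambda>n. if n \<in> reach K l then \<phi> n else \<psi> n);
         redir = (\<lambda>u. if u = \<phi> l then m r else u);
         lab1 = (\<lambda>x. if x \<in> \<psi> ` N then lab K (the_inv_into N \<psi> x) else lab G x);
         att1 = (\<lambda>x. if x \<in> \<psi> ` N then map m (att K (the_inv_into N \<psi> x)) else att G x);
         G2 = \<lparr> nodes = nodes G \<union> \<psi> ` N, lab = lab1, att = (\<lambda>x. map redir (att1 x)),
                root = (if root G = \<phi> l then m r else root G) \<rparr>
     in sub G2 (root G2))"

definition rstep :: "(('f,'w) lgraph \<times> 'w \<times> 'w) set \<Rightarrow> ('f,'v) tgraph \<Rightarrow> ('f,'v) tgraph \<Rightarrow> bool" where
  "rstep R G H \<longleftrightarrow> (\<exists>K l r \<phi> \<psi>. (K,l,r) \<in> R \<and> hom K l G \<phi> \<and>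
     inj_on \<psi> (reach K r - reach K l) \<and> \<psi> ` (reach K r - reach K l) \<inter> nodes G = {} \<and>
     H = rewrite_result G K l r \<phi> \<psi>)"

text \<open>(f,g) in P means f is below g in the precedence.\<close>
definition precedence :: "'f set \<Rightarrow> 'f set \<Rightarrow> ('f \<times> 'f) set \<Rightarrow> bool" where
  "precedence F C P \<longleftrightarrow> P \<subseteq> F \<times> F \<and> wf P \<and> trans P \<and> (\<forall>c\<in>C. \<forall>f. (f,c) \<notin> P)"

text \<open>pt P na K h g: K restricted to h is below K restricted to g (sub-term graphs of the common
  graph K are identified with their roots).\<close>
inductive pt :: "('f \<times> 'f) set \<Rightarrow> ('f \<Rightarrow> nat) \<Rightarrow> ('f,'w,'x) lgraph_scheme \<Rightarrow> 'w \<Rightarrow> 'w \<Rightarrow> bool"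
  for P na K where
  sub_arg: "(\<forall>u\<in>reach K h. \<forall>f. lab K u = Some f \<longrightarrow> (\<exists>g'. lab K g = Some g' \<and> (f,g') \<in> P))
     \<Longrightarrow> (\<exists>u\<in>set (att K g). h = u \<or> pt P na K h u) \<Longrightarrow> pt P na K h g"
| sep: "(\<forall>u\<in>reach K h. \<forall>f. lab K u = Some f \<longrightarrow> (\<exists>g'. lab K g = Some g' \<and> (f,g') \<in> P))
     \<Longrightarrow> lab K h \<noteq> None
     \<Longrightarrow> (\<forall>v\<in>nrm_succ na K h. \<exists>w\<in>nrm_succ na K g. v \<in> reach K w)
     \<Longrightarrow> (\<forall>v\<in>safe_succ na K h. pt P na K v g) \<Longrightarrow> pt P na K h g"

definition pt_terminating :: "'f set \<Rightarrow> 'f set \<Rightarrow> ('f \<Rightarrow> nat) \<Rightarrow> (('f,'w) lgraph \<times> 'w \<times> 'w) set \<Rightarrow> bool" where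
  "pt_terminating F C na R \<longleftrightarrow> (\<exists>P. precedence F C P \<and> (\<forall>(K,l,r)\<in>R. pt P na K r l))"

end

theory Submission
  imports Defs
begin

text \<open>(1) In a graph of \<open>\<T>\<G>\<^sub>n\<^sub>r\<^sub>m\<close> a node whose sub-term graph is not constructor-only
  has all its normal successors constructor-only, so a path can only reach a node carrying a
  defined symbol, such as the image of the left-hand root of a constructor rule, through safe
  positions.
  (2) In a rewrite step every old node not above the redex keeps its sub-term graph; nodes
  above the redex reach it only along safe edges by (1), so it suffices that the instance of
  the right-hand side is in \<open>\<T>\<G>\<^sub>n\<^sub>r\<^sub>m\<close>. This follows by induction on the
  precedence-termination derivation of \<open>K\<restriction>r \<sqsubset>\<^sub>p\<^sub>t K\<restriction>l\<close>: nodes inherited from the redex are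
  below its root and hence lie in \<open>\<T>\<G>\<^sub>n\<^sub>r\<^sub>m\<close>, normal arguments of new nodes are copied from
  normal (hence constructor) arguments of the redex, and safe arguments are handled by the
  induction hypothesis. Acyclicity of the result is shown by layering its nodes into those
  strictly below the redex, the new nodes, and the rest.\<close>

lemma reach_refl [simp]: "v \<in> reach G v"
  by (simp add: reach_def)

lemma reach_trans: "u \<in> reach G v \<Longrightarrow> w \<in> reach G u \<Longrightarrow> w \<in> reach G v"
  unfolding reach_def by (auto intro: rtrancl_trans)

lemma reach_att: "v \<in> nodes G \<Longrightarrow> u \<in> set (att G v) \<Longrightarrow> w \<in> reach G u \<Longrightarrow> w \<in> reach G v"
  unfolding reach_def edge_rel_def by (auto intro: converse_rtrancl_into_rtrancl)

lemma reach_cases: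
  "u \<in> reach G v \<Longrightarrow> u = v \<or> (v \<in> nodes G \<and> (\<exists>c\<in>set (att G v). u \<in> reach G c))"
  unfolding reach_def edge_rel_def by (auto elim: converse_rtranclE)

lemma reach_subset_nodes:
  assumes "wf_lgraph F ar G" "v \<in> nodes G"
  shows "reach G v \<subseteq> nodes G"
proof
  fix u assume "u \<in> reach G v"
  then have "(v,u) \<in> (edge_rel G)\<^sup>*" by (simp add: reach_def)
  then show "u \<in> nodes G"
    by (induction rule: rtrancl_induct) (use assms in \<open>auto simp: edge_rel_def wf_lgraph_def\<close>)
qed

lemma reach_closed:
  assumes "wf_lgraph F ar G" "v \<in> nodes G"
  shows "\<forall>x\<in>reach G v. set (att G x) \<subseteq> reach G v"
  using reach_subset_nodes[OF assms] reach_att reach_trans by (metis reach_refl subset_iff)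

definition agree_on :: "('f,'v,'x) lgraph_scheme \<Rightarrow> ('f,'v,'y) lgraph_scheme \<Rightarrow> 'v set \<Rightarrow> bool" where
  "agree_on G H X \<longleftrightarrow>
     (\<forall>x\<in>X. (x \<in> nodes H \<longleftrightarrow> x \<in> nodes G) \<and> lab H x = lab G x \<and> att H x = att G x)"

lemma agree_on_reach:
  assumes closed: "\<forall>x\<in>X. set (att G x) \<subseteq> X" and agree: "agree_on G H X" and v: "v \<in> X"
  shows "reach H v = reach G v" "reach G v \<subseteq> X"
proof -
  have G_to_H: "u \<in> X \<and> (v,u) \<in> (edge_rel H)\<^sup>*" if "(v,u) \<in> (edge_rel G)\<^sup>*" for u
    using that
  proof (induction rule: rtrancl_induct)
    case (step a b)
    then have "a \<in> X" "a \<in> nodes G" "b \<in> set (att G a)" by (auto simp: edge_rel_def)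
    with closed agree have "b \<in> X" "(a,b) \<in> edge_rel H" by (auto simp: agree_on_def edge_rel_def)
    with step show ?case by (auto intro: rtrancl_into_rtrancl)
  qed (simp add: v)
  have H_to_G: "(v,u) \<in> (edge_rel G)\<^sup>*" if "(v,u) \<in> (edge_rel H)\<^sup>*" for u
    using that
  proof (induction rule: rtrancl_induct)
    case (step a b)
    then have "a \<in> X" using G_to_H by blast
    with step closed agree have "(a,b) \<in> edge_rel G" by (auto simp: agree_on_def edge_rel_def)
    with step show ?case by (auto intro: rtrancl_into_rtrancl)
  qed simp
  show "reach H v = reach G v" using G_to_H H_to_G by (auto simp: reach_def)
  show "reach G v \<subseteq> X" using G_to_H by (auto simp: reach_def)
qed

lemma tgC_agree_on:
  assumes "\<forall>x\<in>X. set (att G x) \<subseteq> X" "agree_on G H X" "v \<in> X" "tgC C G v"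
  shows "tgC C H v"
  using agree_on_reach[OF assms(1-3)] assms(2,4) unfolding tgC_def agree_on_def by auto

lemma succ_sets_map:
  fixes H :: "('f,'v,'y) lgraph_scheme" and G :: "('f,'w,'x) lgraph_scheme"
  assumes "lab H y = lab G x" "att H y = map g (att G x)"
  shows "nrm_succ na H y = g ` nrm_succ na G x" "safe_succ na H y = g ` safe_succ na G x"
  using assms by (cases "lab G x"; force simp: nrm_succ_def safe_succ_def)+

lemma succ_sets_subset_att: "nrm_succ na G x \<subseteq> set (att G x)" "safe_succ na G x \<subseteq> set (att G x)"
  by (auto simp: nrm_succ_def safe_succ_def split: option.splits)

lemma att_nrm_or_safe_succ:
  assumes "wf_lgraph F ar G" "x \<in> nodes G" "c \<in> set (att G x)"
  shows "c \<in> nrm_succ na G x \<or> c \<in> safe_succ na G x"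
proof -
  obtain i where i: "i < length (att G x)" "c = att G x ! i"
    using assms(3) by (auto simp: in_set_conv_nth)
  show ?thesis
  proof (cases "lab G x")
    case None
    then show ?thesis using assms i by (auto simp: wf_lgraph_def)
  next
    case (Some g)
    then show ?thesis using i by (cases "i < na g") (auto simp: nrm_succ_def safe_succ_def)
  qed
qed

lemma nrm_at_agree_on:
  assumes "nrm_at C na G v" "\<forall>x\<in>X. set (att G x) \<subseteq> X" "agree_on G H X" "v \<in> X"
  shows "nrm_at C na H v"
  using assms(1,4)
proof (induction rule: nrm_at.induct)
  case (constr v)
  then show ?case by (intro nrm_at.constr tgC_agree_on[OF assms(2,3)])
next
  case (sep v)
  have "lab H v = lab G v" "att H v = map id (att G v)"
    using assms(3) sep.prems unfolding agree_on_def by simp_all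
  from succ_sets_map[OF this, of na]
  have succ: "nrm_succ na H v = nrm_succ na G v" "safe_succ na H v = safe_succ na G v"
    by simp_all
  have in_X: "set (att G v) \<subseteq> X" using assms(2) sep.prems by blast
  show ?case
  proof (rule nrm_at.sep)
    show "\<forall>u\<in>nrm_succ na H v. tgC C H u"
    proof
      fix u assume "u \<in> nrm_succ na H v"
      then have u: "u \<in> nrm_succ na G v" using succ(1) by simp
      then have "u \<in> X" using in_X succ_sets_subset_att(1)[of na G v] by blast
      moreover have "tgC C G u" using u sep.hyps(1) by blast
      ultimately show "tgC C H u" by (rule tgC_agree_on[OF assms(2,3)])
    qed
    show "\<forall>u\<in>safe_succ na H v. nrm_at C na H u"
    proof
      fix u assume "u \<in> safe_succ na H v"
      then have u: "u \<in> safe_succ na G v" using succ(2) by simp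
      then have "u \<in> X" using in_X succ_sets_subset_att(2)[of na G v] by blast
      with u sep.IH show "nrm_at C na H u" by blast
    qed
  qed
qed

lemma tgC_reach: "tgC C G v \<Longrightarrow> u \<in> reach G v \<Longrightarrow> tgC C G u"
  unfolding tgC_def by (meson reach_trans)

lemma nrm_at_reach:
  assumes wf: "wf_lgraph F ar G" and "nrm_at C na G x" and "y \<in> reach G x"
  shows "nrm_at C na G y"
  using assms(2,3)
proof (induction arbitrary: y rule: nrm_at.induct)
  case (constr v)
  show ?case by (rule nrm_at.constr, rule tgC_reach[OF constr.hyps constr.prems])
next
  case (sep v)
  from reach_cases[OF sep.prems] show ?case
  proof
    assume "y = v"
    then show ?thesis using sep.hyps(1) sep.IH by (blast intro: nrm_at.sep)
  next
    assume "v \<in> nodes G \<and> (\<exists>c\<in>set (att G v). y \<in> reach G c)"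
    then obtain c where c: "v \<in> nodes G" "c \<in> set (att G v)" "y \<in> reach G c" by blast
    from att_nrm_or_safe_succ[OF wf c(1,2)] show ?thesis
    proof
      assume "c \<in> nrm_succ na G v"
      then have "tgC C G c" using sep.hyps(1) by blast
      then show ?thesis by (rule nrm_at.constr[OF tgC_reach[OF _ c(3)]])
    next
      assume "c \<in> safe_succ na G v"
      then show ?thesis using sep.IH c(3) by blast
    qed
  qed
qed

lemma tg_nrm_nodes: "tg_nrm F C ar na G \<Longrightarrow> x \<in> nodes G \<Longrightarrow> nrm_at C na G x"
  unfolding tg_nrm_def is_tg_def using nrm_at_reach[of F ar G C na "root G" x] by blast

lemma nrm_succ_tgC_above_defined:
  assumes "nrm_at C na G x" "y \<in> reach G x" "lab G y = Some f" "f \<notin> C" "u \<in> nrm_succ na G x"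
  shows "tgC C G u"
proof -
  have "\<not> tgC C G x" using assms(2-4) by (auto simp: tgC_def)
  with assms(1,5) show ?thesis by (cases rule: nrm_at.cases) auto
qed

lemma path_edge:
  assumes p: "is_path G vs ms" and j: "Suc j < length vs"
  shows "vs ! j \<in> nodes G" "vs ! Suc j \<in> set (att G (vs ! j))"
proof -
  have "vs ! j \<in> set vs" using j by simp
  then show "vs ! j \<in> nodes G" using p by (auto simp: is_path_def)
  have "j < length ms" using p j by (simp add: is_path_def)
  then have "ms ! j < length (att G (vs ! j))" "vs ! Suc j = att G (vs ! j) ! (ms ! j)"
    using p unfolding is_path_def by blast+
  then show "vs ! Suc j \<in> set (att G (vs ! j))" by simp
qed

lemma path_nth_reach:
  assumes p: "is_path G vs ms" and "k < length vs" "i \<le> k"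
  shows "vs ! k \<in> reach G (vs ! i)"
  using assms(2,3)
proof (induction k)
  case (Suc k)
  show ?case
  proof (cases "i = Suc k")
    case False
    with Suc have "vs ! k \<in> reach G (vs ! i)" by simp
    moreover have "vs ! Suc k \<in> reach G (vs ! k)"
      using path_edge[OF p Suc.prems(1)] by (rule reach_att) simp
    ultimately show ?thesis by (rule reach_trans)
  qed simp
qed simp

lemma path_to_defined_safe:
  assumes G: "tg_nrm F C ar na G" and p: "is_path G vs ms"
    and lx: "lab G (last vs) = Some f" and fC: "f \<notin> C"
  shows "safe_path na G vs"
  unfolding safe_path_def
proof (intro allI impI)
  fix j assume j: "Suc j < length vs"
  have "last vs = vs ! (length vs - 1)" using p by (simp add: is_path_def last_conv_nth)
  then have reach_last: "last vs \<in> reach G (vs ! Suc j)"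
    using path_nth_reach[OF p, of "length vs - 1" "Suc j"] j by simp
  note vj = path_edge(1)[OF p j] and cj = path_edge(2)[OF p j]
  have "wf_lgraph F ar G" using G by (simp add: tg_nrm_def is_tg_def)
  from att_nrm_or_safe_succ[OF this vj cj] show "vs ! Suc j \<in> safe_succ na G (vs ! j)"
  proof
    assume "vs ! Suc j \<in> nrm_succ na G (vs ! j)"
    with nrm_succ_tgC_above_defined[OF tg_nrm_nodes[OF G vj] reach_att[OF vj cj reach_last] lx fC]
    have "tgC C G (vs ! Suc j)" .
    with reach_last lx fC show ?thesis unfolding tgC_def by blast
  qed
qed

lemma pt_lab:
  "pt P na K h g \<Longrightarrow> u \<in> reach K h \<Longrightarrow> lab K u = Some f' \<Longrightarrow> \<exists>g'. lab K g = Some g' \<and> (f',g') \<in> P"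
  by (erule pt.cases) auto

text \<open>Below a constructor node only clause (1) of \<open>\<sqsubset>\<^sub>p\<^sub>t\<close> applies, since constructors are minimal.\<close>
lemma pt_below_constructor_reach:
  assumes "pt P na K h g" "wf_lgraph F ar K" "precedence F C P" "g \<in> nodes K" "tgC C K g"
  shows "h \<in> reach K g"
  using assms(1,4,5)
proof (induction rule: pt.induct)
  case (sub_arg h g)
  then obtain u where u: "u \<in> set (att K g)"
    "h = u \<or> (u \<in> nodes K \<longrightarrow> tgC C K u \<longrightarrow> h \<in> reach K u)" by blast
  have "u \<in> nodes K" using assms(2) sub_arg.prems u(1) by (auto simp: wf_lgraph_def)
  moreover have u_reach: "u \<in> reach K g" by (rule reach_att[OF sub_arg.prems(1) u(1) reach_refl])
  moreover have "tgC C K u" using sub_arg.prems(2) u_reach by (rule tgC_reach)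
  ultimately have "h \<in> reach K u" using u(2) by auto
  then show ?case by (rule reach_trans[OF u_reach])
next
  case (sep h g)
  then obtain f' where "lab K h = Some f'" by auto
  with bspec[OF sep.hyps(1) reach_refl] obtain g' where g': "lab K g = Some g'" "(f',g') \<in> P"
    by blast
  have "g' \<in> C" using bspec[OF sep.prems(2)[unfolded tgC_def] reach_refl] g'(1) by blast
  with g'(2) show ?case using assms(3) unfolding precedence_def by blast
qed

lemma hom_edge:
  assumes "wf_lgraph F ar K" "hom K l G \<phi>" "a \<in> reach K l" "(a,b) \<in> edge_rel K"
  shows "(\<phi> a, \<phi> b) \<in> edge_rel G"
proof -
  have a: "a \<in> nodes K" "b \<in> set (att K a)" using assms(4) by (auto simp: edge_rel_def)
  then have "lab K a \<noteq> None" using assms(1) by (cases "lab K a") (auto simp: wf_lgraph_def)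
  then have "att G (\<phi> a) = map \<phi> (att K a)" "\<phi> a \<in> nodes G"
    using assms(2,3) by (auto simp: hom_def)
  then show ?thesis using a by (auto simp: edge_rel_def)
qed

lemma hom_trancl:
  assumes "wf_lgraph F ar K" "hom K l G \<phi>" "(a,b) \<in> (edge_rel K)\<^sup>+" "a \<in> reach K l"
  shows "(\<phi> a, \<phi> b) \<in> (edge_rel G)\<^sup>+"
  using assms(3,4)
proof (induction rule: trancl_induct)
  case (base y)
  then show ?case using hom_edge[OF assms(1,2)] by blast
next
  case (step y z)
  have "y \<in> reach K l"
    using step.prems step.hyps(1) by (auto simp: reach_def intro: rtrancl_trans)
  then show ?case using step hom_edge[OF assms(1,2)] by (meson trancl_into_trancl)
qed

lemma hom_reach:
  assumes "wf_lgraph F ar K" "hom K l G \<phi>" "a \<in> reach K l" "b \<in> reach K a"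
  shows "\<phi> b \<in> reach G (\<phi> a)"
proof -
  have "a = b \<or> (a,b) \<in> (edge_rel K)\<^sup>+" using assms(4) unfolding reach_def by (auto dest: rtranclD)
  then show ?thesis
    using hom_trancl[OF assms(1,2) _ assms(3)] unfolding reach_def
    by (auto dest: trancl_into_rtrancl)
qed

lemma sub_agree_on_reach:
  assumes "wf_lgraph F ar G" "v \<in> nodes G"
  shows "agree_on G (sub G v) (reach G v)" "reach (sub G v) v = reach G v"
proof -
  show agree: "agree_on G (sub G v) (reach G v)"
    using reach_subset_nodes[OF assms] by (auto simp: agree_on_def sub_def)
  show "reach (sub G v) v = reach G v"
    using agree_on_reach(1)[OF reach_closed[OF assms] agree reach_refl] .
qed

lemma tg_nrm_sub:
  assumes wf: "wf_lgraph F ar G" and v: "v \<in> nodes G" and nrm: "nrm_at C na G v"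
  shows "tg_nrm F C ar na (sub G v)"
proof -
  let ?S = "sub G v" and ?X = "reach G v"
  have X: "?X \<subseteq> nodes G" using reach_subset_nodes[OF wf v] .
  note closed = reach_closed[OF wf v] and agree = sub_agree_on_reach[OF wf v]
  have "edge_rel ?S \<subseteq> edge_rel G" using X by (auto simp: edge_rel_def sub_def)
  then have "acyclic (edge_rel ?S)" using wf acyclic_subset by (auto simp: wf_lgraph_def)
  moreover have "finite (nodes ?S)" using X wf finite_subset by (auto simp: wf_lgraph_def sub_def)
  moreover have "\<forall>x\<in>nodes ?S. set (att ?S x) \<subseteq> nodes ?S \<and>
      (case lab ?S x of Some f \<Rightarrow> f \<in> F \<and> length (att ?S x) = ar f | None \<Rightarrow> att ?S x = [])"
  proof
    fix x assume "x \<in> nodes ?S"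
    then have x: "x \<in> ?X" by (simp add: sub_def)
    then have "lab ?S x = lab G x" "att ?S x = att G x" "nodes ?S = ?X" by (simp_all add: sub_def)
    show "set (att ?S x) \<subseteq> nodes ?S \<and>
      (case lab ?S x of Some f \<Rightarrow> f \<in> F \<and> length (att ?S x) = ar f | None \<Rightarrow> att ?S x = [])"
    proof -
      have "x \<in> nodes G" using x X by blast
      then have "case lab G x of Some f \<Rightarrow> f \<in> F \<and> length (att G x) = ar f | None \<Rightarrow> att G x = []"
        using wf unfolding wf_lgraph_def by blast
      then show ?thesis using closed x \<open>lab ?S x = lab G x\<close> \<open>att ?S x = att G x\<close>
        \<open>nodes ?S = ?X\<close> by (simp split: option.splits)
    qed
  qed
  ultimately have "wf_lgraph F ar ?S" by (simp add: wf_lgraph_def)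
  moreover have "nrm_at C na ?S v" using nrm_at_agree_on[OF nrm closed agree(1) reach_refl] .
  ultimately show ?thesis using agree(2) by (simp add: tg_nrm_def is_tg_def sub_def)
qed

section \<open>Rewrite steps\<close>

locale rewrite_step =
  fixes F C :: "'f set" and ar na :: "'f \<Rightarrow> nat" and G :: "('f,'v) tgraph"
    and K :: "('f,'w) lgraph" and l r :: 'w and \<phi> \<psi> :: "'w \<Rightarrow> 'v"
    and P :: "('f \<times> 'f) set" and f :: 'f
  assumes G_nrm: "tg_nrm F C ar na G"
   and rule: "is_rule F ar (K,l,r)" and basic: "basic_at F C K l"
   and hom: "hom K l G \<phi>" and inj: "inj_on \<psi> (reach K r - reach K l)"
   and fresh: "\<psi> ` (reach K r - reach K l) \<inter> nodes G = {}"
   and prec: "precedence F C P" and ptr: "pt P na K r l"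
   and lab_l: "lab K l = Some f" and f_defined: "f \<notin> C"
begin

definition "rhs_new = reach K r - reach K l"
definition "inst = (\<lambda>n. if n \<in> reach K l then \<phi> n else \<psi> n)"
definition "redirect = (\<lambda>u. if u = \<phi> l then inst r else u)"

text \<open>The graph after building and redirection, before garbage collection.\<close>
definition "built = \<lparr> nodes = nodes G \<union> \<psi> ` rhs_new,
    lab = (\<lambda>x. if x \<in> \<psi> ` rhs_new then lab K (the_inv_into rhs_new \<psi> x) else lab G x),
    att = (\<lambda>x. map redirect
      (if x \<in> \<psi> ` rhs_new then map inst (att K (the_inv_into rhs_new \<psi> x)) else att G x)),
    root = (if root G = \<phi> l then inst r else root G) \<rparr>"

lemma rewrite_result_eq: "rewrite_result G K l r \<phi> \<psi> = sub built (root built)"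
  unfolding rewrite_result_def Let_def built_def rhs_new_def inst_def redirect_def by simp

lemma wf_G: "wf_lgraph F ar G" using G_nrm by (simp add: tg_nrm_def is_tg_def)
lemma root_node: "root G \<in> nodes G" using G_nrm by (simp add: tg_nrm_def is_tg_def)
lemma wf_K: "wf_lgraph F ar K" using rule by (simp add: is_rule_def)
lemma l_node: "l \<in> nodes K" and r_node: "r \<in> nodes K" and l_ne_r: "l \<noteq> r"
  using rule by (auto simp: is_rule_def)
lemma acyclic_G: "acyclic (edge_rel G)" using wf_G by (simp add: wf_lgraph_def)
lemma acyclic_K: "acyclic (edge_rel K)" using wf_K by (simp add: wf_lgraph_def)
lemma nrm_at_G: "x \<in> nodes G \<Longrightarrow> nrm_at C na G x" by (rule tg_nrm_nodes[OF G_nrm])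

lemma att_G_nodes: "x \<in> nodes G \<Longrightarrow> set (att G x) \<subseteq> nodes G" using wf_G by (auto simp: wf_lgraph_def)
lemma att_K_nodes: "x \<in> nodes K \<Longrightarrow> set (att K x) \<subseteq> nodes K" using wf_K by (auto simp: wf_lgraph_def)

lemma phi_nodes: "w \<in> reach K l \<Longrightarrow> \<phi> w \<in> nodes G" using hom by (auto simp: hom_def)

lemma phi_below_redex:
  assumes "w \<in> reach K l" "w \<noteq> l"
  shows "\<phi> w \<noteq> \<phi> l" "\<phi> w \<in> reach G (\<phi> l)" "\<phi> l \<notin> reach G (\<phi> w)"
proof -
  have t: "(\<phi> l, \<phi> w) \<in> (edge_rel G)\<^sup>+"
    using assms hom_trancl[OF wf_K hom, of l w] by (auto simp: reach_def dest: rtranclD)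
  then show "\<phi> w \<noteq> \<phi> l" using acyclic_G by (auto simp: acyclic_def)
  show "\<phi> w \<in> reach G (\<phi> l)" using t by (simp add: reach_def)
  show "\<phi> l \<notin> reach G (\<phi> w)" using t acyclic_G unfolding reach_def acyclic_def
    by (meson mem_Collect_eq trancl_rtrancl_trancl)
qed

lemma lab_G_redex: "lab G (\<phi> l) = Some f" using hom lab_l by (auto simp: hom_def)
lemma att_G_redex: "att G (\<phi> l) = map \<phi> (att K l)" using hom lab_l by (auto simp: hom_def)

lemma not_tgC_above_redex: "\<phi> l \<in> reach G x \<Longrightarrow> \<not> tgC C G x"
  using lab_G_redex f_defined by (auto simp: tgC_def)

lemma l_notin_reach_r: "l \<notin> reach K r"
proof
  assume "l \<in> reach K r"
  from pt_lab[OF ptr this lab_l] have "(f,f) \<in> P" using lab_l by auto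
  then show False using prec by (auto simp: precedence_def)
qed

lemma pt_l_ne: "pt P na K h l \<Longrightarrow> h \<noteq> l"
  using pt_lab[of P na K h l l f] lab_l prec by (auto simp: precedence_def)

lemma rhs_new_nodes: "rhs_new \<subseteq> nodes K"
  using reach_subset_nodes[OF wf_K r_node] by (auto simp: rhs_new_def)
lemma inv_psi: "n \<in> rhs_new \<Longrightarrow> the_inv_into rhs_new \<psi> (\<psi> n) = n"
  using inj the_inv_into_f_f by (metis rhs_new_def)
lemma psi_fresh: "n \<in> rhs_new \<Longrightarrow> \<psi> n \<notin> nodes G" using fresh by (auto simp: rhs_new_def)

lemma nodes_built[simp]: "nodes built = nodes G \<union> \<psi> ` rhs_new" by (simp add: built_def)
lemma root_built: "root built = (if root G = \<phi> l then inst r else root G)" by (simp add: built_def)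
lemma built_old: "x \<in> nodes G \<Longrightarrow> lab built x = lab G x \<and> att built x = map redirect (att G x)"
  using fresh by (auto simp: built_def rhs_new_def)
lemma built_new: "n \<in> rhs_new \<Longrightarrow>
    lab built (\<psi> n) = lab K n \<and> att built (\<psi> n) = map redirect (map inst (att K n))"
  using inv_psi by (auto simp: built_def)

lemma agree_on_old:
  assumes "x \<in> nodes G" "\<phi> l \<notin> reach G x"
  shows "agree_on G built (reach G x)"
  unfolding agree_on_def
proof
  fix y assume y: "y \<in> reach G x"
  then have yn: "y \<in> nodes G" using reach_subset_nodes[OF wf_G assms(1)] by blast
  have "\<forall>w\<in>set (att G y). w \<noteq> \<phi> l" using reach_closed[OF wf_G assms(1)] y assms(2) by blast
  then have "map redirect (att G y) = att G y" by (auto simp: redirect_def intro!: map_idI)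
  then show "(y \<in> nodes built \<longleftrightarrow> y \<in> nodes G) \<and> lab built y = lab G y \<and> att built y = att G y"
    using built_old[OF yn] yn by simp
qed

lemma nrm_at_old: "x \<in> nodes G \<Longrightarrow> \<phi> l \<notin> reach G x \<Longrightarrow> nrm_at C na built x"
  using nrm_at_agree_on[OF nrm_at_G reach_closed[OF wf_G] agree_on_old] by simp

lemma tgC_old: "x \<in> nodes G \<Longrightarrow> \<phi> l \<notin> reach G x \<Longrightarrow> tgC C G x \<Longrightarrow> tgC C built x"
  using tgC_agree_on[OF reach_closed[OF wf_G] agree_on_old] by simp

lemma nrm_at_inst_lhs: "h \<in> reach K l \<Longrightarrow> h \<noteq> l \<Longrightarrow> nrm_at C na built (inst h)"
  using nrm_at_old[OF phi_nodes phi_below_redex(3)] by (simp add: inst_def)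

lemma lhs_arg_reach_ne: "w \<in> set (att K l) \<Longrightarrow> v \<in> reach K w \<Longrightarrow> v \<noteq> l"
proof
  assume a: "w \<in> set (att K l)" "v \<in> reach K w" "v = l"
  then have "(l,w) \<in> edge_rel K" "(w,l) \<in> (edge_rel K)\<^sup>*"
    using l_node by (auto simp: edge_rel_def reach_def)
  then have "(l,l) \<in> (edge_rel K)\<^sup>+" by auto
  then show False using acyclic_K by (auto simp: acyclic_def)
qed

lemma nrm_arg_instance:
  assumes w: "w \<in> nrm_succ na K l" and v: "v \<in> reach K w"
  shows "redirect (inst v) = \<phi> v" "tgC C built (\<phi> v)"
proof -
  have wa: "w \<in> set (att K l)" using w succ_sets_subset_att(1)[of na K l] by blast
  have vl: "v \<in> reach K l" using reach_att[OF l_node wa v] .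
  have vne: "v \<noteq> l" using lhs_arg_reach_ne[OF wa v] .
  show "redirect (inst v) = \<phi> v"
    using phi_below_redex(1)[OF vl vne] vl by (simp add: inst_def redirect_def)
  have "nrm_succ na G (\<phi> l) = \<phi> ` nrm_succ na K l"
    by (rule succ_sets_map(1); simp add: lab_G_redex att_G_redex lab_l)
  then have "\<phi> w \<in> nrm_succ na G (\<phi> l)" using w by simp
  then have "tgC C G (\<phi> w)"
    using nrm_succ_tgC_above_defined[OF nrm_at_G[OF phi_nodes[OF reach_refl]] reach_refl
        lab_G_redex f_defined] by blast
  moreover have "\<phi> v \<in> reach G (\<phi> w)"
    by (rule hom_reach[OF wf_K hom reach_att[OF l_node wa reach_refl] v])
  ultimately have "tgC C G (\<phi> v)" by (rule tgC_reach)
  then show "tgC C built (\<phi> v)"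
    using tgC_old[OF phi_nodes[OF vl] phi_below_redex(3)[OF vl vne]] by simp
qed

lemma inst_ne_redex:
  assumes "v \<in> reach K r" "v \<noteq> l"
  shows "inst v \<noteq> \<phi> l"
proof (cases "v \<in> reach K l")
  case True
  then show ?thesis using phi_below_redex(1)[OF True assms(2)] by (simp add: inst_def)
next
  case False
  then have "\<psi> v \<notin> nodes G" using assms(1) psi_fresh by (simp add: rhs_new_def)
  then show ?thesis using False phi_nodes[OF reach_refl] by (auto simp: inst_def)
qed

lemma nrm_at_inst_rhs:
  assumes "pt P na K h g" "g = l" "h \<in> reach K r"
  shows "nrm_at C na built (inst h)"
  using assms
proof (induction rule: pt.induct)
  case (sub_arg h g)
  then obtain u where u: "u \<in> set (att K l)" "h = u \<or> pt P na K h u" by blast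
  have un: "u \<in> nodes K" using att_K_nodes l_node u(1) by blast
  have "tgC C K u" using basic u(1) by (auto simp: basic_at_def)
  then have hu: "h \<in> reach K u"
    using u(2) pt_below_constructor_reach[OF _ wf_K prec un] by auto
  then show ?case
    using nrm_at_inst_lhs reach_att[OF l_node u(1) hu] lhs_arg_reach_ne[OF u(1) hu] by blast
next
  case (sep h g)
  then obtain f' where f': "lab K h = Some f'" by auto
  show ?case
  proof (cases "h \<in> reach K l")
    case True
    have "h \<noteq> l" using sep.hyps(1) sep.prems(1) f' lab_l prec by (fastforce simp: precedence_def)
    then show ?thesis using nrm_at_inst_lhs True by blast
  next
    case False
    then have hN: "h \<in> rhs_new" using sep.prems by (simp add: rhs_new_def)
    have hn: "h \<in> nodes K" using hN rhs_new_nodes by blast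
    have inst_h: "inst h = \<psi> h" using False by (simp add: inst_def)
    have "lab built (\<psi> h) = lab K h" "att built (\<psi> h) = map (redirect \<circ> inst) (att K h)"
      using built_new[OF hN] by simp_all
    note succ = succ_sets_map[OF this]
    have nrm_ok: "tgC C built (redirect (inst v))" if "v \<in> nrm_succ na K h" for v
    proof -
      have "\<exists>w\<in>nrm_succ na K l. v \<in> reach K w" using sep.hyps(3) sep.prems(1) that by simp
      then obtain w where "w \<in> nrm_succ na K l" "v \<in> reach K w" ..
      from nrm_arg_instance[OF this] show ?thesis by simp
    qed
    have safe_ok: "nrm_at C na built (redirect (inst v))" if v: "v \<in> safe_succ na K h" for v
    proof -
      have "v \<in> set (att K h)" using v succ_sets_subset_att(2)[of na K h] by blast
      then have vr: "v \<in> reach K r"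
        using reach_trans[OF sep.prems(2) reach_att[OF hn _ reach_refl]] by blast
      have "pt P na K v l" "nrm_at C na built (inst v)" using sep.IH v sep.prems vr by auto
      then show ?thesis using inst_ne_redex[OF vr pt_l_ne] by (simp add: redirect_def)
    qed
    show ?thesis unfolding inst_h
      by (rule nrm_at.sep) (auto simp: succ intro: nrm_ok safe_ok)
  qed
qed

lemma nrm_at_inst_r: "nrm_at C na built (inst r)" using nrm_at_inst_rhs[OF ptr] by simp

lemma tgC_redirect_old:
  assumes "w \<in> nodes G" "tgC C G w"
  shows "tgC C built (redirect w)"
proof -
  have nr: "\<phi> l \<notin> reach G w" using not_tgC_above_redex assms(2) by blast
  then have "w \<noteq> \<phi> l" by (metis reach_refl)
  then show ?thesis using tgC_old[OF assms(1) nr assms(2)] by (simp add: redirect_def)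
qed

lemma nrm_at_built_old: "nrm_at C na G x \<Longrightarrow> x \<in> nodes G \<Longrightarrow> x \<noteq> \<phi> l \<Longrightarrow> nrm_at C na built x"
proof (induction rule: nrm_at.induct)
  case (constr x)
  then have "\<phi> l \<notin> reach G x" using not_tgC_above_redex by blast
  then show ?case using nrm_at_old constr by blast
next
  case (sep x)
  have sm1: "nrm_succ na built x = redirect ` nrm_succ na G x"
    by (rule succ_sets_map(1); simp add: built_old[OF sep.prems(1)])
  have sm2: "safe_succ na built x = redirect ` safe_succ na G x"
    by (rule succ_sets_map(2); simp add: built_old[OF sep.prems(1)])
  note sm = sm1 sm2
  show ?case
  proof (rule nrm_at.sep)
    show "\<forall>u\<in>nrm_succ na built x. tgC C built u"
    proof
      fix u assume "u \<in> nrm_succ na built x"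
      then obtain w where w: "w \<in> nrm_succ na G x" "u = redirect w" using sm by auto
      have wn: "w \<in> nodes G"
        using att_G_nodes[OF sep.prems(1)] succ_sets_subset_att(1)[of na G x] w(1) by blast
      have "tgC C G w" using sep.hyps(1) w(1) by blast
      then show "tgC C built u" using w(2) tgC_redirect_old[OF wn] by simp
    qed
    show "\<forall>u\<in>safe_succ na built x. nrm_at C na built u"
    proof
      fix u assume "u \<in> safe_succ na built x"
      then obtain w where w: "w \<in> safe_succ na G x" "u = redirect w" using sm by auto
      have wn: "w \<in> nodes G"
        using att_G_nodes[OF sep.prems(1)] succ_sets_subset_att(2)[of na G x] w(1) by blast
      show "nrm_at C na built u"
      proof (cases "w = \<phi> l")
        case True then show ?thesis using w(2) nrm_at_inst_r by (simp add: redirect_def)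
      next
        case False then show ?thesis using w sep.IH wn by (simp add: redirect_def)
      qed
    qed
  qed
qed

lemma nrm_at_built_root: "nrm_at C na built (root built)"
  using nrm_at_inst_r nrm_at_built_old[OF nrm_at_G[OF root_node] root_node]
  by (simp add: root_built)

lemma inst_in: "w \<in> reach K r \<Longrightarrow> inst w \<in> nodes built"
  using phi_nodes by (auto simp: inst_def rhs_new_def)

lemma inst_r_in: "inst r \<in> nodes built" by (rule inst_in[OF reach_refl])

lemma redirect_in: "u \<in> nodes built \<Longrightarrow> redirect u \<in> nodes built"
  using inst_r_in by (simp add: redirect_def)

lemma att_built_nodes: assumes "v \<in> nodes built" shows "set (att built v) \<subseteq> nodes built"
proof (cases "v \<in> nodes G")
  case True
  then show ?thesis using built_old[OF True] att_G_nodes[OF True] redirect_in by auto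
next
  case False
  then obtain n where n: "n \<in> rhs_new" "v = \<psi> n" using assms by auto
  have nn: "n \<in> nodes K" using n rhs_new_nodes by blast
  have "w \<in> reach K r" if "w \<in> set (att K n)" for w
    using reach_trans[of n K r w] reach_att[OF nn that reach_refl] n(1) by (auto simp: rhs_new_def)
  then show ?thesis using built_new[OF n(1)] n(2) inst_in redirect_in by auto
qed

definition "below_redex = reach G (\<phi> l) - {\<phi> l}"
definition "layer x = (if x \<in> below_redex then 0 else if x \<in> \<psi> ` rhs_new then 1 else (2::nat))"
definition "copied_edges = {(\<psi> a, \<psi> b) | a b. a \<in> rhs_new \<and> b \<in> rhs_new \<and> (a,b) \<in> edge_rel K}"
text \<open>Edges of \<open>built\<close> never climb a layer, and inside a layer they are edges of \<open>G\<close>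
  or copies of edges of \<open>K\<close>; both are acyclic.\<close>
definition "layer_edges = edge_rel G \<union> copied_edges"

lemma below_redex_nodes: "below_redex \<subseteq> nodes G"
  using reach_subset_nodes[OF wf_G phi_nodes[OF reach_refl]] by (auto simp: below_redex_def)

lemma acyclic_G_cycle: "(a,b) \<in> (edge_rel G)\<^sup>+ \<Longrightarrow> (b,a) \<in> (edge_rel G)\<^sup>* \<Longrightarrow> False"
  using acyclic_G by (auto simp: acyclic_def dest: trancl_rtrancl_trancl)

lemma built_edge_layer_new:
  assumes n: "n \<in> rhs_new" and y: "y \<in> set (att built (\<psi> n))"
  shows "layer y < layer (\<psi> n) \<or> (layer y = layer (\<psi> n) \<and> (\<psi> n, y) \<in> layer_edges)"
proof -
  have nn: "n \<in> nodes K" using n rhs_new_nodes by blast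
  obtain w where w: "w \<in> set (att K n)" "y = redirect (inst w)" using built_new[OF n] y by auto
  have wr: "w \<in> reach K r"
    using reach_trans[of n K r w] reach_att[OF nn w(1) reach_refl] n by (auto simp: rhs_new_def)
  have lx: "layer (\<psi> n) = 1" using n below_redex_nodes psi_fresh by (auto simp: layer_def)
  show ?thesis
  proof (cases "w \<in> reach K l")
    case True
    have "w \<noteq> l" using wr l_notin_reach_r by blast
    then have "y = \<phi> w" "\<phi> w \<in> below_redex" using phi_below_redex[OF True] w(2) True
      by (auto simp: inst_def redirect_def below_redex_def)
    then show ?thesis using lx by (simp add: layer_def)
  next
    case False
    then have wN: "w \<in> rhs_new" using wr by (simp add: rhs_new_def)
    have "\<psi> w \<noteq> \<phi> l" using psi_fresh[OF wN] phi_nodes[OF reach_refl] by auto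
    then have "y = \<psi> w" using w(2) False by (simp add: inst_def redirect_def)
    moreover have "(\<psi> n, y) \<in> copied_edges"
      using n wN nn w(1) calculation by (auto simp: copied_edges_def edge_rel_def)
    moreover have "layer y = 1"
      using calculation wN below_redex_nodes psi_fresh by (auto simp: layer_def)
    ultimately show ?thesis using lx by (simp add: layer_edges_def)
  qed
qed

lemma built_edge_layer_old:
  assumes x: "x \<in> nodes G" and y: "y \<in> set (att built x)"
  shows "layer y < layer x \<or> (layer y = layer x \<and> (x,y) \<in> layer_edges)"
proof -
  obtain w where w: "w \<in> set (att G x)" "y = redirect w" using built_old[OF x] y by auto
  have ew: "(x,w) \<in> edge_rel G" using x w(1) by (auto simp: edge_rel_def)
  show ?thesis
  proof (cases "x \<in> below_redex")
    case True
    then have t: "(\<phi> l, x) \<in> (edge_rel G)\<^sup>+"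
      by (auto simp: below_redex_def reach_def dest: rtranclD)
    have "w \<noteq> \<phi> l" using acyclic_G_cycle[OF t] ew by auto
    moreover have "(\<phi> l, w) \<in> (edge_rel G)\<^sup>+" using t ew by auto
    then have "w \<in> below_redex" using acyclic_G_cycle by (auto simp: below_redex_def reach_def)
    ultimately show ?thesis using w(2) True ew by (simp add: redirect_def layer_def layer_edges_def)
  next
    case False
    have lx: "layer x = 2" using False x psi_fresh by (auto simp: layer_def)
    show ?thesis
    proof (cases "w = \<phi> l")
      case True
      have "layer (inst r) < 2"
      proof (cases "r \<in> reach K l")
        case True
        then have "\<phi> r \<in> below_redex"
          using phi_below_redex[OF True] l_ne_r by (auto simp: below_redex_def)
        then show ?thesis using True by (simp add: inst_def layer_def)
      qed (auto simp: inst_def layer_def rhs_new_def)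
      then show ?thesis using True w(2) lx by (simp add: redirect_def)
    next
      case False
      then show ?thesis using w(2) lx ew by (auto simp: redirect_def layer_def layer_edges_def)
    qed
  qed
qed

lemma built_edge_layer:
  assumes "(x,y) \<in> edge_rel built"
  shows "layer y < layer x \<or> (layer y = layer x \<and> (x,y) \<in> layer_edges)"
proof -
  have x: "x \<in> nodes built" and y: "y \<in> set (att built x)" using assms by (auto simp: edge_rel_def)
  show ?thesis
  proof (cases "x \<in> nodes G")
    case False
    then obtain n where "n \<in> rhs_new" "x = \<psi> n" using x by auto
    then show ?thesis using built_edge_layer_new y by blast
  qed (rule built_edge_layer_old[OF _ y])
qed

lemma built_trancl_layer: "(x,y) \<in> (edge_rel built)\<^sup>+ \<Longrightarrow>
    layer y \<le> layer x \<and> (layer y = layer x \<longrightarrow> (x,y) \<in> layer_edges\<^sup>+)"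
proof (induction rule: trancl_induct)
  case (base y) then show ?case using built_edge_layer by fastforce
next
  case (step y z)
  from built_edge_layer[OF step.hyps(2)] step.IH show ?case
    by (auto intro: trancl_into_trancl)
qed

lemma copied_edges_trancl: "(p,q) \<in> copied_edges\<^sup>+ \<Longrightarrow>
    \<exists>a b. a \<in> rhs_new \<and> b \<in> rhs_new \<and> p = \<psi> a \<and> q = \<psi> b \<and> (a,b) \<in> (edge_rel K)\<^sup>+"
proof (induction rule: trancl_induct)
  case (base y) then show ?case by (auto simp: copied_edges_def)
next
  case (step y z)
  then obtain a b where ab: "a \<in> rhs_new" "b \<in> rhs_new" "p = \<psi> a" "y = \<psi> b"
    "(a,b) \<in> (edge_rel K)\<^sup>+" by blast
  from step.hyps(2) obtain b' c where bc: "b' \<in> rhs_new" "c \<in> rhs_new" "y = \<psi> b'" "z = \<psi> c"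
    "(b',c) \<in> edge_rel K"
    by (auto simp: copied_edges_def)
  have "b' = b" using inj ab bc by (metis rhs_new_def inj_onD)
  then have "(a,c) \<in> (edge_rel K)\<^sup>+" using ab(5) bc(5) by auto
  then show ?case using ab bc by blast
qed

lemma layer_edges_trancl: "(x,y) \<in> layer_edges\<^sup>+ \<Longrightarrow>
    (x \<in> nodes G \<longrightarrow> (x,y) \<in> (edge_rel G)\<^sup>+) \<and> (x \<notin> nodes G \<longrightarrow> (x,y) \<in> copied_edges\<^sup>+)"
proof (induction rule: trancl_induct)
  case (base y)
  then show ?case using psi_fresh by (auto simp: layer_edges_def copied_edges_def edge_rel_def)
next
  case (step y z)
  have yG: "y \<in> nodes G" if "(x,y) \<in> (edge_rel G)\<^sup>+"
    using that tranclD2 att_G_nodes by (fastforce simp: edge_rel_def)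
  have yN: "y \<notin> nodes G" if "(x,y) \<in> copied_edges\<^sup>+"
    using that copied_edges_trancl psi_fresh by blast
  show ?case
  proof (cases "x \<in> nodes G")
    case True
    then have "y \<in> nodes G" using step.IH yG by blast
    then have "(y,z) \<in> edge_rel G"
      using step.hyps(2) psi_fresh by (auto simp: layer_edges_def copied_edges_def)
    then show ?thesis using step.IH True by auto
  next
    case False
    then have "y \<notin> nodes G" using step.IH yN by blast
    then have "(y,z) \<in> copied_edges" using step.hyps(2) by (auto simp: layer_edges_def edge_rel_def)
    then show ?thesis using step.IH False by auto
  qed
qed

lemma acyclic_built: "acyclic (edge_rel built)"
  unfolding acyclic_def
proof (intro allI notI)
  fix x assume "(x,x) \<in> (edge_rel built)\<^sup>+"
  then have q: "(x,x) \<in> layer_edges\<^sup>+" using built_trancl_layer by blast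
  show False
  proof (cases "x \<in> nodes G")
    case True then show False using layer_edges_trancl[OF q] acyclic_G by (auto simp: acyclic_def)
  next
    case False
    then obtain a b where "a \<in> rhs_new" "b \<in> rhs_new" "x = \<psi> a" "x = \<psi> b" "(a,b) \<in> (edge_rel K)\<^sup>+"
      using layer_edges_trancl[OF q] copied_edges_trancl by blast
    moreover then have "a = b" using inj by (metis rhs_new_def inj_onD)
    ultimately show False using acyclic_K by (auto simp: acyclic_def)
  qed
qed

lemma wf_built: "wf_lgraph F ar built"
  unfolding wf_lgraph_def
proof (intro conjI ballI)
  have "finite (nodes G)" using wf_G by (simp add: wf_lgraph_def)
  moreover have "finite rhs_new"
    using rhs_new_nodes wf_K finite_subset by (auto simp: wf_lgraph_def)
  ultimately show "finite (nodes built)" by simp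
  show "acyclic (edge_rel built)" by (rule acyclic_built)
  fix v assume v: "v \<in> nodes built"
  show "set (att built v) \<subseteq> nodes built" by (rule att_built_nodes[OF v])
  show "case lab built v of None \<Rightarrow> att built v = [] | Some f \<Rightarrow> f \<in> F \<and> length (att built v) = ar f"
  proof (cases "v \<in> nodes G")
    case True
    then show ?thesis
      using built_old[OF True] wf_G by (auto simp: wf_lgraph_def split: option.splits)
  next
    case False
    then obtain n where n: "n \<in> rhs_new" "v = \<psi> n" using v by auto
    have nn: "n \<in> nodes K" using n rhs_new_nodes by blast
    then show ?thesis
      using built_new[OF n(1)] n(2) wf_K by (auto simp: wf_lgraph_def split: option.splits)
  qed
qed

lemma tg_nrm_rewrite_result: "tg_nrm F C ar na (rewrite_result G K l r \<phi> \<psi>)"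
proof -
  have "root built \<in> nodes built" using inst_r_in root_node by (simp add: root_built)
  then show ?thesis
    unfolding rewrite_result_eq by (rule tg_nrm_sub[OF wf_built _ nrm_at_built_root])
qed

end

lemma rstep_preserves_tg_nrm:
  assumes G: "tg_nrm F C ar na G" and R: "constructor_grs F C ar R"
    and pt_term: "pt_terminating F C na R" and step: "rstep R G H"
  shows "tg_nrm F C ar na H"
proof -
  obtain P where P: "precedence F C P" "\<forall>(K,l,r)\<in>R. pt P na K r l"
    using pt_term by (auto simp: pt_terminating_def)
  obtain K l r \<phi> \<psi> where st: "(K,l,r) \<in> R" "hom K l G \<phi>" "inj_on \<psi> (reach K r - reach K l)"
      "\<psi> ` (reach K r - reach K l) \<inter> nodes G = {}" "H = rewrite_result G K l r \<phi> \<psi>"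
    using step by (auto simp: rstep_def)
  have rule: "is_rule F ar (K,l,r)" "basic_at F C K l"
    using R st(1) by (auto simp: constructor_grs_def)
  then obtain f where f: "lab K l = Some f" "f \<notin> C" by (auto simp: basic_at_def)
  interpret rewrite_step F C ar na G K l r \<phi> \<psi> P f
    using G rule st(2-4) P f st(1) by unfold_locales auto
  show ?thesis using st(5) tg_nrm_rewrite_result by simp
qed

lemma redex_path_safe:
  assumes G: "tg_nrm F C ar na G" and R: "constructor_grs F C ar R" and "(K,l,r) \<in> R"
    and "hom K l G \<phi>" and p: "is_path G vs ms" and "last vs = \<phi> l"
  shows "safe_path na G vs"
proof -
  have "basic_at F C K l" using R assms(3) by (auto simp: constructor_grs_def)
  then obtain f where "lab K l = Some f" "f \<notin> C" by (auto simp: basic_at_def)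
  with assms(4,6) have "lab G (last vs) = Some f" "f \<notin> C" by (auto simp: hom_def)
  then show ?thesis by (rule path_to_defined_safe[OF G p])
qed

theorem mainTheorem2:
  fixes F C :: "'f set" and ar na :: "'f \<Rightarrow> nat"
    and R :: "(('f,'w) lgraph \<times> 'w \<times> 'w) set" and G :: "('f,'v) tgraph"
  assumes "finite F" and "C \<subseteq> F" and "arg_sep F C ar na"
    and "constructor_grs F C ar R" and "tg_nrm F C ar na G"
  shows "(\<forall>K l r \<phi>. (K,l,r) \<in> R \<longrightarrow> hom K l G \<phi> \<longrightarrow>
            (\<forall>vs ms. is_path G vs ms \<longrightarrow> hd vs = root G \<longrightarrow> last vs = \<phi> l \<longrightarrow> safe_path na G vs))
       \<and> (pt_terminating F C na R \<longrightarrow> (\<forall>H'. rstep R G H' \<longrightarrow> tg_nrm F C ar na H'))"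
  using redex_path_safe[OF assms(5,4)] rstep_preserves_tg_nrm[OF assms(5,4)] by blast

end
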